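(* Let $T>0$ and let $(\psi,r)$ be a (differentiable) solution on $[0,T]$ of the adjoint least squares shadowing (LSS) system $$\frac{d\psi}{dt}+f_u^*\psi+J_u=r,\qquad \psi(0)=0,\ \psi(T)=0,\qquad \frac{dr}{dt}-f_u r=\frac{1}{\alpha^2}\big(\psi^Tf+J-\bar J\big)f .$$ Let $\psi^\infty$ be the adjoint shadowing direction and let $e(t)=\psi(t)-\psi^\infty(t)$. Then $e$ satisfies $$\mathcal{L}e:=-\frac{d^2e}{dt^2}-\frac{d}{dt}\big(f_u^*e\big)+f_u\frac{de}{dt}+f_uf_u^*e+\frac{1}{\alpha^2}ff^Te=0\quad\text{on }[0,T],\qquad e(0)=-\psi^\infty(0),\ e(T)=-\psi^\infty(T).$$
   Context: Let $X=\mathbb{R}^n$ with inner product $x^Ty$. Let $f:X\times\mathbb{R}\to X$ be $C^2$, fix $s\in\mathbb{R}$, and let $u(t)$, $t\ge0$, solve $\frac{du}{dt}=f(u,s)$. Write $f(t)=f(u(t),s)$, $f_u(t)=\partial f/\partial u$ at $(u(t),s)$, and $f_u^*=f_u^T$. Let $J:X\times\mathbb{R}\to\mathbb{R}$ be smooth, with $J(t)=J(u(t),s)$, $J_u(t)$ its $u$-gradient (column vector), and $\bar J=\lim_{T\to\infty}\frac1T\int_0^TJ\,dt$, assumed to exist. The constant $\alpha^2>0$ is fixed. The adjoint shadowing direction $\psi^\infty:[0,\infty)\to X$ is a bounded differentiable solution of $\frac{d\psi^\infty}{dt}+f_u^*\psi^\infty+J_u=0$ satisfying $\lim_{T\to\infty}\frac1T\int_0^T\psi^{\infty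 T}f\,dt=0$; it is assumed to exist. *)

theory Defs
  imports "HOL-Analysis.Analysis"
begin

definition C2 :: "('a::real_normed_vector \<Rightarrow> 'b::real_normed_vector) \<Rightarrow> bool" where
  "C2 F \<longleftrightarrow> (\<exists>D D2. (\<forall>x. (F has_derivative blinfun_apply (D x)) (at x)) \<and>
                     (\<forall>x. (D has_derivative blinfun_apply (D2 x)) (at x)) \<and>
                     continuous_on UNIV D2)"

fun iter_dd :: "'a::real_normed_vector list \<Rightarrow> ('a \<Rightarrow> real) \<Rightarrow> ('a \<Rightarrow> real)" where
  "iter_dd [] F = F"
| "iter_dd (d # ds) F = iter_dd ds (\<lambda>x. frechet_derivative F (at x) d)"

definition smooth_real :: "('a::euclidean_space \<Rightarrow> real) \<Rightarrow> bool" where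
  "smooth_real F \<longleftrightarrow> (\<forall>ds \<in> lists Basis. \<forall>x. iter_dd ds F differentiable at x)"

end

theory Submission
  imports Defs
begin

text \<open>The pairing \<open>\<psi>\<^sup>\<infinity> \<bullet> f + J\<close> has zero derivative along the trajectory, because the adjoint
  equation for \<open>\<psi>\<^sup>\<infinity>\<close> is dual to the linearised flow \<open>(d/dt) f = f\<^sub>u f\<close>; so it is constant, and
  averaging over \<open>[0, T]\<close> with \<open>T \<rightarrow> \<infinity>\<close> identifies the constant as \<open>Jbar\<close>, since the average of
  \<open>\<psi>\<^sup>\<infinity> \<bullet> f\<close> vanishes. Hence the source term \<open>(\<psi> \<bullet> f + J - Jbar) f\<close> of the LSS system equals
  \<open>(f \<bullet> e) f\<close>. Subtracting the two adjoint equations gives \<open>e' = r - f\<^sub>u\<^sup>* e\<close>, and differentiating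
  once more and inserting the equation for \<open>r\<close> yields \<open>\<L> e = 0\<close>. This needs \<open>f\<^sub>u\<^sup>* e\<close> to be
  differentiable, which holds because \<open>f\<^sub>u\<close> is a partial derivative of the \<open>C\<^sup>2\<close> map \<open>f\<close>.\<close>

lemma adjoint_pairing_has_derivative_zero:
  fixes A :: "real^'n^'n"
  assumes "(\<psi> has_vector_derivative (- (transpose A *v \<psi> t) - j)) (at t within S)"
    and "(F has_vector_derivative A *v F t) (at t within S)"
    and "(G has_vector_derivative j \<bullet> F t) (at t within S)"
  shows "((\<lambda>t. \<psi> t \<bullet> F t + G t) has_vector_derivative 0) (at t within S)"
proof -
  have "((\<lambda>t. \<psi> t \<bullet> F t + G t) has_vector_derivative
          \<psi> t \<bullet> (A *v F t) + (- (transpose A *v \<psi> t) - j) \<bullet> F t + j \<bullet> F t) (at t within S)"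
    using assms by (auto intro!: derivative_eq_intros simp: has_vector_derivative_def distrib_left)
  moreover have "\<psi> t \<bullet> (A *v F t) + (- (transpose A *v \<psi> t) - j) \<bullet> F t + j \<bullet> F t = 0"
    by (simp add: algebra_simps dot_lmul_matrix)
  ultimately show ?thesis by simp
qed

lemma time_average_of_constant_sum:
  fixes a b :: "real \<Rightarrow> real"
  assumes sum_const: "\<And>t. t \<ge> 0 \<Longrightarrow> a t + b t = c"
    and "continuous_on {0..} a" and "continuous_on {0..} b"
    and a_avg: "((\<lambda>T. (1 / T) * integral {0..T} a) \<longlongrightarrow> A) at_top"
    and b_avg: "((\<lambda>T. (1 / T) * integral {0..T} b) \<longlongrightarrow> B) at_top"
  shows "c = A + B"
proof -
  have "(1 / T) * integral {0..T} a + (1 / T) * integral {0..T} b = c" if "T \<ge> 1" for T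
  proof -
    have "integral {0..T} a + integral {0..T} b = integral {0..T} (\<lambda>t. a t + b t)"
      using assms(2,3)
      by (intro integral_add[symmetric] integrable_continuous_interval)
        (auto elim: continuous_on_subset)
    also have "\<dots> = integral {0..T} (\<lambda>t. c)"
      using sum_const by (intro integral_cong) auto
    finally show ?thesis
      using that by (simp add: field_simps)
  qed
  then have "((\<lambda>T. (1 / T) * integral {0..T} a + (1 / T) * integral {0..T} b) \<longlongrightarrow> c) at_top"
    by (intro tendsto_eventually) (auto simp: eventually_at_top_linorder)
  moreover have "((\<lambda>T. (1 / T) * integral {0..T} a + (1 / T) * integral {0..T} b) \<longlongrightarrow> A + B) at_top"
    using a_avg b_avg by (rule tendsto_add)
  ultimately show ?thesis
    using tendsto_unique trivial_limit_at_top_linorder by blast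
qed

lemma adjoint_shadowing_pairing_eq_mean:
  fixes f :: "(real^'n) \<times> real \<Rightarrow> real^'n"
    and fu :: "real^'n \<Rightarrow> real^'n^'n"
    and psiInf :: "real \<Rightarrow> real^'n"
  assumes fu_deriv: "\<And>x. ((\<lambda>v. f (v, s)) has_derivative (\<lambda>h. fu x *v h)) (at x)"
    and Ju_deriv: "\<And>x. ((\<lambda>v. J (v, s)) has_derivative (\<lambda>h. Ju x \<bullet> h)) (at x)"
    and u_ode: "\<And>t. t \<ge> 0 \<Longrightarrow> (u has_vector_derivative f (u t, s)) (at t within {0..})"
    and Jbar_lim: "((\<lambda>T. (1 / T) * integral {0..T} (\<lambda>t. J (u t, s))) \<longlongrightarrow> Jbar) at_top"
    and psiInf_ode: "\<And>t. t \<ge> 0 \<Longrightarrow>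
          (psiInf has_vector_derivative (- (transpose (fu (u t)) *v psiInf t) - Ju (u t)))
            (at t within {0..})"
    and psiInf_avg: "((\<lambda>T. (1 / T) * integral {0..T} (\<lambda>t. psiInf t \<bullet> f (u t, s))) \<longlongrightarrow> 0) at_top"
    and "t \<ge> 0"
  shows "psiInf t \<bullet> f (u t, s) + J (u t, s) = Jbar"
proof -
  have f_along: "((\<lambda>t. f (u t, s)) has_vector_derivative fu (u t) *v f (u t, s)) (at t within {0..})"
    and J_along: "((\<lambda>t. J (u t, s)) has_vector_derivative Ju (u t) \<bullet> f (u t, s)) (at t within {0..})"
    if "t \<ge> 0" for t
    using vector_derivative_diff_chain_within[OF u_ode[OF that] has_derivative_at_withinI[OF fu_deriv]]
      vector_derivative_diff_chain_within[OF u_ode[OF that] has_derivative_at_withinI[OF Ju_deriv]]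
    by (simp_all add: o_def)
  have "\<exists>c. \<forall>t\<in>{0..}. psiInf t \<bullet> f (u t, s) + J (u t, s) = c"
  proof (rule has_derivative_zero_constant)
    fix t :: real assume "t \<in> {0..}"
    then show "((\<lambda>t. psiInf t \<bullet> f (u t, s) + J (u t, s)) has_derivative (\<lambda>h. 0)) (at t within {0..})"
      using adjoint_pairing_has_derivative_zero[OF psiInf_ode f_along J_along]
      by (simp add: has_vector_derivative_def)
  qed (auto simp: convex_real_interval)
  then obtain c where c: "\<And>t. t \<ge> 0 \<Longrightarrow> psiInf t \<bullet> f (u t, s) + J (u t, s) = c"
    by auto
  have "continuous_on {0..} psiInf" "continuous_on {0..} (\<lambda>t. f (u t, s))"
    "continuous_on {0..} (\<lambda>t. J (u t, s))"
    using psiInf_ode f_along J_along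
    by (auto simp: continuous_on_eq_continuous_within intro: has_vector_derivative_continuous)
  then have "c = 0 + Jbar"
    by (intro time_average_of_constant_sum[OF c _ _ psiInf_avg Jbar_lim]) (auto intro: continuous_intros)
  with c \<open>t \<ge> 0\<close> show ?thesis by simp
qed

lemma partial_derivative_eq_total_derivative:
  assumes "((\<lambda>v. f (v, s)) has_derivative L) (at x)" and "(f has_derivative D) (at (x, s))"
  shows "L h = D (h, 0)"
proof -
  have "((\<lambda>v. f (v, s)) has_derivative (\<lambda>h. D (h, 0))) (at x)"
    using has_derivative_compose[OF has_derivative_Pair[OF has_derivative_ident has_derivative_const] assms(2)]
    by simp
  from has_derivative_unique[OF assms(1) this] show ?thesis by meson
qed

lemma transpose_mult_eq_sum_axis:
  fixes A :: "real^'n^'m"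
  shows "transpose A *v e = (\<Sum>i\<in>UNIV. (e \<bullet> (A *v axis i 1)) *\<^sub>R axis i 1)"
  by (simp add: vec_eq_iff matrix_vector_mult_def transpose_def inner_vec_def axis_def
      if_distrib mult.commute cong: if_cong)

lemma differentiable_transpose_partial_derivative_along:
  fixes f :: "(real^'n) \<times> 'p::real_normed_vector \<Rightarrow> real^'m"
    and fu :: "real^'n \<Rightarrow> real^'n^'m"
    and e :: "'a::real_normed_vector \<Rightarrow> real^'m"
  assumes "C2 f"
    and fu_deriv: "\<And>x. ((\<lambda>v. f (v, s)) has_derivative (\<lambda>h. fu x *v h)) (at x)"
    and u_diff: "u differentiable (at t within S)"
    and e_diff: "e differentiable (at t within S)"
  shows "(\<lambda>\<tau>. transpose (fu (u \<tau>)) *v e \<tau>) differentiable (at t within S)"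
proof -
  obtain D D2 where D: "\<And>x. (f has_derivative blinfun_apply (D x)) (at x)"
    and D2: "\<And>x. (D has_derivative blinfun_apply (D2 x)) (at x)"
    using \<open>C2 f\<close> unfolding C2_def by blast
  have D_along: "(\<lambda>\<tau>. D (u \<tau>, s)) differentiable (at t within S)"
  proof -
    have "(\<lambda>\<tau>. (u \<tau>, s)) differentiable (at t within S)"
      using u_diff unfolding differentiable_def by (blast intro: has_derivative_Pair[OF _ has_derivative_const])
    moreover have "D differentiable (at (u t, s) within (\<lambda>\<tau>. (u \<tau>, s)) ` S)"
      using D2 unfolding differentiable_def by (blast intro: has_derivative_at_withinI)
    ultimately show ?thesis
      using differentiable_chain_within[of "\<lambda>\<tau>. (u \<tau>, s)" t S D] by (simp add: o_def)
  qed
  have column_along: "(\<lambda>\<tau>. D (u \<tau>, s) (axis i 1, 0)) differentiable (at t within S)" for i :: 'n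
  proof -
    have "(\<lambda>B. blinfun_apply B (axis i 1 :: real^'n, 0 :: 'p))
        differentiable (at (D (u t, s)) within (\<lambda>\<tau>. D (u \<tau>, s)) ` S)"
      by (simp add: bounded_linear_imp_differentiable)
    from differentiable_chain_within[OF D_along this] show ?thesis by (simp add: o_def)
  qed
  have fu_eq: "fu x *v h = D (x, s) (h, 0)" for x h
    using partial_derivative_eq_total_derivative[OF fu_deriv D] .
  have column_sum: "(\<lambda>\<tau>. transpose (fu (u \<tau>)) *v e \<tau>)
      = (\<lambda>\<tau>. \<Sum>i\<in>UNIV. (e \<tau> \<bullet> D (u \<tau>, s) (axis i 1, 0)) *\<^sub>R axis i 1)"
    unfolding transpose_mult_eq_sum_axis fu_eq ..
  show ?thesis
    unfolding column_sum using e_diff column_along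
    by (intro differentiable_sum differentiable_scaleR differentiable_inner) auto
qed

lemma has_vector_derivative_vector_derivative_within_interval:
  fixes a b t :: real and e :: "real \<Rightarrow> 'a::euclidean_space"
  assumes "a < b" and e_deriv: "\<And>\<tau>. \<tau> \<in> {a..b} \<Longrightarrow> (e has_vector_derivative e' \<tau>) (at \<tau> within {a..b})"
    and t: "t \<in> {a..b}" and "(e' has_vector_derivative d) (at t within {a..b})"
  shows "((\<lambda>\<tau>. vector_derivative e (at \<tau> within {a..b})) has_vector_derivative d) (at t within {a..b})"
proof (rule has_vector_derivative_transform[OF t _ assms(4)])
  show "vector_derivative e (at \<tau> within {a..b}) = e' \<tau>" if "\<tau> \<in> {a..b}" for \<tau>
    using vector_derivative_within_closed_interval[OF \<open>a < b\<close> that e_deriv[OF that]] .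
qed

theorem mainTheorem2:
  fixes f :: "(real^'n) \<times> real \<Rightarrow> real^'n"
    and J :: "(real^'n) \<times> real \<Rightarrow> real"
    and s :: real
    and u :: "real \<Rightarrow> real^'n"
    and fu :: "real^'n \<Rightarrow> real^'n^'n"
    and Ju :: "real^'n \<Rightarrow> real^'n"
    and Jbar alpha T :: real
    and psiInf psi r :: "real \<Rightarrow> real^'n"
  assumes f_C2: "C2 f"
    and J_smooth: "smooth_real J"
    and fu_def: "\<And>x. ((\<lambda>v. f (v, s)) has_derivative (\<lambda>h. fu x *v h)) (at x)"
    and Ju_def: "\<And>x. ((\<lambda>v. J (v, s)) has_derivative (\<lambda>h. Ju x \<bullet> h)) (at x)"
    and u_ode: "\<And>t. t \<ge> 0 \<Longrightarrow> (u has_vector_derivative f (u t, s)) (at t within {0..})"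
    and Jbar_def: "((\<lambda>T. (1 / T) * integral {0..T} (\<lambda>t. J (u t, s))) \<longlongrightarrow> Jbar) at_top"
    and alpha: "alpha \<noteq> 0"
    and psiInf_bdd: "bounded (psiInf ` {0..})"
    and psiInf_ode: "\<And>t. t \<ge> 0 \<Longrightarrow>
          (psiInf has_vector_derivative (- (transpose (fu (u t)) *v psiInf t) - Ju (u t)))
            (at t within {0..})"
    and psiInf_avg: "((\<lambda>T. (1 / T) * integral {0..T} (\<lambda>t. psiInf t \<bullet> f (u t, s))) \<longlongrightarrow> 0) at_top"
    and T_pos: "T > 0"
    and psi_ode: "\<And>t. t \<in> {0..T} \<Longrightarrow>
          (psi has_vector_derivative (r t - transpose (fu (u t)) *v psi t - Ju (u t)))
            (at t within {0..T})"
    and psi_0: "psi 0 = 0"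
    and psi_T: "psi T = 0"
    and r_ode: "\<And>t. t \<in> {0..T} \<Longrightarrow>
          (r has_vector_derivative
             (fu (u t) *v r t
              + (1 / alpha\<^sup>2) *\<^sub>R ((psi t \<bullet> f (u t, s) + J (u t, s) - Jbar) *\<^sub>R f (u t, s))))
            (at t within {0..T})"
  shows "(\<forall>t\<in>{0..T}. \<exists>e' e'' g'.
            ((\<lambda>\<tau>. psi \<tau> - psiInf \<tau>) has_vector_derivative e') (at t within {0..T}) \<and>
            ((\<lambda>\<tau>. vector_derivative (\<lambda>\<sigma>. psi \<sigma> - psiInf \<sigma>) (at \<tau> within {0..T}))
                has_vector_derivative e'') (at t within {0..T}) \<and>
            ((\<lambda>\<tau>. transpose (fu (u \<tau>)) *v (psi \<tau> - psiInf \<tau>))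
                has_vector_derivative g') (at t within {0..T}) \<and>
            - e'' - g' + fu (u t) *v e'
              + fu (u t) *v (transpose (fu (u t)) *v (psi t - psiInf t))
              + (1 / alpha\<^sup>2) *\<^sub>R ((f (u t, s) \<bullet> (psi t - psiInf t)) *\<^sub>R f (u t, s)) = 0)
        \<and> psi 0 - psiInf 0 = - psiInf 0
        \<and> psi T - psiInf T = - psiInf T"
proof -
  define e where "e = (\<lambda>\<tau>. psi \<tau> - psiInf \<tau>)"
  define g where "g = (\<lambda>\<tau>. transpose (fu (u \<tau>)) *v e \<tau>)"
  have e_deriv: "(e has_vector_derivative r t - g t) (at t within {0..T})" if "t \<in> {0..T}" for t
    using has_vector_derivative_diff[OF psi_ode[OF that]
        has_vector_derivative_within_subset[OF psiInf_ode]] that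
    by (auto simp: e_def g_def algebra_simps)
  have g_diff: "g differentiable (at t within {0..T})" if "t \<in> {0..T}" for t
    unfolding g_def
  proof (rule differentiable_transpose_partial_derivative_along[OF f_C2 fu_def])
    show "u differentiable (at t within {0..T})"
      using that has_vector_derivative_within_subset[OF u_ode, of t "{0..T}"]
      by (auto intro: differentiableI_vector)
    show "e differentiable (at t within {0..T})"
      using e_deriv[OF that] by (rule differentiableI_vector)
  qed
  define g' where "g' t = vector_derivative g (at t within {0..T})" for t
  have g_deriv: "(g has_vector_derivative g' t) (at t within {0..T})" if "t \<in> {0..T}" for t
    unfolding g'_def using g_diff[OF that] vector_derivative_works by blast
  define e'' where "e'' t = fu (u t) *v r t
      + (1 / alpha\<^sup>2) *\<^sub>R ((psi t \<bullet> f (u t, s) + J (u t, s) - Jbar) *\<^sub>R f (u t, s)) - g' t" for t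
  have e'_deriv: "((\<lambda>\<tau>. vector_derivative e (at \<tau> within {0..T})) has_vector_derivative e'' t)
      (at t within {0..T})" if "t \<in> {0..T}" for t
    unfolding e''_def using T_pos e_deriv that has_vector_derivative_diff[OF r_ode g_deriv, OF that that]
    by (rule has_vector_derivative_vector_derivative_within_interval)
  have source: "psi t \<bullet> f (u t, s) + J (u t, s) - Jbar = f (u t, s) \<bullet> e t" if "t \<ge> 0" for t
    using adjoint_shadowing_pairing_eq_mean[OF fu_def Ju_def u_ode Jbar_def psiInf_ode psiInf_avg, of t] that
    by (simp add: e_def inner_diff_right inner_commute[of "f (u t, s)"])
  have "- e'' t - g' t + fu (u t) *v (r t - g t) + fu (u t) *v g t
      + (1 / alpha\<^sup>2) *\<^sub>R ((f (u t, s) \<bullet> e t) *\<^sub>R f (u t, s)) = 0" if "t \<ge> 0" for t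
    unfolding e''_def source[OF that] by (simp add: algebra_simps)
  then show ?thesis
    using e_deriv e'_deriv g_deriv psi_0 psi_T unfolding e_def g_def by fastforce
qed

end
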